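(* Let $X$ be a perfectly normal $T_1$ space. The following are equivalent: (1) $X$ is finite; (2) every maximal ideal of $B_1(X)$ is fixed; (3) every proper ideal of $B_1(X)$ is fixed.
   Context: For a topological space $X$, $B_1(X)$ denotes the ring (pointwise operations) of all Baire one functions $f:X\to\mathbb{R}$, i.e. pointwise limits of sequences of continuous real-valued functions. For $f$, $Z(f)=\{x: f(x)=0\}$. A proper ideal $I$ is fixed if $\bigcap_{f\in I}Z(f)\neq\emptyset$, and free otherwise. *)

theory Defs
  imports "HOL-Analysis.Analysis" "HOL-Algebra.Ideal"
begin

definition perfectly_normal_space :: "'a topology \<Rightarrow> bool" where
  "perfectly_normal_space X \<longleftrightarrow>
     normal_space X \<and> (\<forall>C. closedin X C \<longrightarrow> gdelta_in X C)"

text \<open>Functions are represented extensionally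
  (value 0 outside the topspace) so that each function X -> R has a unique representative.\<close>
definition baire_one :: "'a topology \<Rightarrow> ('a \<Rightarrow> real) set" where
  "baire_one X = {f. (\<forall>x. x \<notin> topspace X \<longrightarrow> f x = 0) \<and>
     (\<exists>g :: nat \<Rightarrow> 'a \<Rightarrow> real. (\<forall>n. continuous_map X euclideanreal (g n)) \<and>
        (\<forall>x\<in>topspace X. (\<lambda>n. g n x) \<longlonglongrightarrow> f x))}"

definition B1_ring :: "'a topology \<Rightarrow> ('a \<Rightarrow> real) ring" where
  "B1_ring X = \<lparr> carrier = baire_one X,
                 mult = (\<lambda>f g x. f x * g x),
                 one = (\<lambda>x. if x \<in> topspace X then 1 else 0),
                 zero = (\<lambda>x. 0),
                 add = (\<lambda>f g x. f x + g x) \<rparr>"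

definition zero_set :: "'a topology \<Rightarrow> ('a \<Rightarrow> real) \<Rightarrow> 'a set" where
  "zero_set X f = {x \<in> topspace X. f x = 0}"

definition fixed_ideal :: "'a topology \<Rightarrow> ('a \<Rightarrow> real) set \<Rightarrow> bool" where
  "fixed_ideal X I \<longleftrightarrow> topspace X \<inter> (\<Inter>f\<in>I. zero_set X f) \<noteq> {}"

end

theory Submission
  imports Defs
begin

text \<open>If \<open>X\<close> is finite and \<open>T\<^sub>1\<close> it is discrete, so \<open>B\<^sub>1(X)\<close> is the ring of all functions
  on \<open>X\<close>; a free proper ideal would contain, for each point, a function not vanishing there,
  and the sum of their squares would be a unit. Conversely, in a perfectly normal \<open>T\<^sub>1\<close> space
  every singleton is a closed \<open>G\<^sub>\<delta>\<close>, so by Urysohn its indicator is a pointwise limit of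
  continuous functions. If \<open>X\<close> is infinite, the finitely supported Baire one functions form a
  proper ideal containing all these indicators; a maximal ideal above it is free.\<close>

lemma baire_one_vanishes: "f \<in> baire_one X \<Longrightarrow> x \<notin> topspace X \<Longrightarrow> f x = 0"
  unfolding baire_one_def by auto

lemma baire_one_add:
  assumes "f \<in> baire_one X" "g \<in> baire_one X"
  shows "(\<lambda>x. f x + g x) \<in> baire_one X"
proof -
  obtain a where "\<forall>n. continuous_map X euclideanreal (a n)" "\<forall>x\<in>topspace X. (\<lambda>n. a n x) \<longlonglongrightarrow> f x"
    using assms(1) unfolding baire_one_def by blast
  moreover obtain b where "\<forall>n. continuous_map X euclideanreal (b n)" "\<forall>x\<in>topspace X. (\<lambda>n. b n x) \<longlonglongrightarrow> g x"
    using assms(2) unfolding baire_one_def by blast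
  ultimately show ?thesis
    using assms by (auto simp: baire_one_def intro!: exI[of _ "\<lambda>n x. a n x + b n x"] continuous_map_add tendsto_add)
qed

lemma baire_one_mult:
  assumes "f \<in> baire_one X" "g \<in> baire_one X"
  shows "(\<lambda>x. f x * g x) \<in> baire_one X"
proof -
  obtain a where "\<forall>n. continuous_map X euclideanreal (a n)" "\<forall>x\<in>topspace X. (\<lambda>n. a n x) \<longlonglongrightarrow> f x"
    using assms(1) unfolding baire_one_def by blast
  moreover obtain b where "\<forall>n. continuous_map X euclideanreal (b n)" "\<forall>x\<in>topspace X. (\<lambda>n. b n x) \<longlonglongrightarrow> g x"
    using assms(2) unfolding baire_one_def by blast
  ultimately show ?thesis
    using assms by (auto simp: baire_one_def intro!: exI[of _ "\<lambda>n x. a n x * b n x"] continuous_map_real_mult tendsto_mult)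
qed

lemma baire_one_minus:
  assumes "f \<in> baire_one X"
  shows "(\<lambda>x. - f x) \<in> baire_one X"
proof -
  obtain a where "\<forall>n. continuous_map X euclideanreal (a n)" "\<forall>x\<in>topspace X. (\<lambda>n. a n x) \<longlonglongrightarrow> f x"
    using assms unfolding baire_one_def by blast
  then show ?thesis
    using assms by (auto simp: baire_one_def intro!: exI[of _ "\<lambda>n x. - a n x"] continuous_map_minus tendsto_minus)
qed

lemma baire_one_zero: "(\<lambda>x. 0) \<in> baire_one X"
  unfolding baire_one_def by (auto intro!: exI[of _ "\<lambda>n x. 0"])

lemma baire_one_one: "(\<lambda>x. if x \<in> topspace X then 1 else 0) \<in> baire_one X"
  unfolding baire_one_def by (auto intro!: exI[of _ "\<lambda>n x. 1"])

lemma cring_B1_ring: "cring (B1_ring X)"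
proof (rule cringI)
  show "abelian_group (B1_ring X)"
  proof (rule abelian_groupI)
    fix f assume "f \<in> carrier (B1_ring X)"
    then show "\<exists>g\<in>carrier (B1_ring X). g \<oplus>\<^bsub>B1_ring X\<^esub> f = \<zero>\<^bsub>B1_ring X\<^esub>"
      by (intro bexI[of _ "\<lambda>x. - f x"]) (auto simp: B1_ring_def baire_one_minus)
  qed (auto simp: B1_ring_def baire_one_add baire_one_zero)
  show "comm_monoid (B1_ring X)"
    by (rule comm_monoidI)
      (auto simp: B1_ring_def baire_one_mult baire_one_one fun_eq_iff baire_one_vanishes)
qed (auto simp: B1_ring_def fun_eq_iff algebra_simps)

lemma (in ring) ideal_Union_chain:
  assumes "C \<noteq> {}" and ideals: "\<And>J. J \<in> C \<Longrightarrow> ideal J R"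
    and chain: "\<And>J K. J \<in> C \<Longrightarrow> K \<in> C \<Longrightarrow> J \<subseteq> K \<or> K \<subseteq> J"
  shows "ideal (\<Union>C) R"
proof (rule idealI)
  have subgroup: "additive_subgroup J R" if "J \<in> C" for J
    using ideals[OF that] by (rule ideal.axioms(1))
  show "subgroup (\<Union>C) (add_monoid R)"
  proof (rule add.subgroupI)
    show "\<Union>C \<subseteq> carrier R"
      using additive_subgroup.a_subset[OF subgroup] by blast
    obtain J where "J \<in> C" using assms(1) by auto
    then show "\<Union>C \<noteq> {}"
      using additive_subgroup.zero_closed[OF subgroup] by blast
  next
    fix a assume "a \<in> \<Union>C"
    then show "\<ominus> a \<in> \<Union>C"
      using additive_subgroup.a_inv_closed[OF subgroup] by blast
  next
    fix a b assume "a \<in> \<Union>C" "b \<in> \<Union>C"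
    then obtain L where "L \<in> C" "a \<in> L" "b \<in> L"
      using chain by blast
    then show "a \<oplus> b \<in> \<Union>C"
      using additive_subgroup.a_closed[OF subgroup] by blast
  qed
next
  fix a x assume "a \<in> \<Union>C" "x \<in> carrier R"
  then obtain J where "J \<in> C" "a \<in> J" by blast
  with \<open>x \<in> carrier R\<close> show "x \<otimes> a \<in> \<Union>C" "a \<otimes> x \<in> \<Union>C"
    using ideal.I_l_closed[OF ideals] ideal.I_r_closed[OF ideals] by blast+
qed (rule ring_axioms)

lemma (in ring) exists_maximalideal_superset:
  assumes "ideal I R" "I \<noteq> carrier R"
  obtains M where "maximalideal M R" "I \<subseteq> M"
proof -
  define A where "A = {J. ideal J R \<and> \<one> \<notin> J \<and> I \<subseteq> J}"
  have "I \<in> A"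
    using assms ideal.one_imp_carrier unfolding A_def by blast
  have "\<exists>U\<in>A. \<forall>J\<in>C. J \<subseteq> U" if "C \<in> chains A" for C
  proof (cases "C = {}")
    case False
    have "C \<subseteq> A" "\<And>J K. J \<in> C \<Longrightarrow> K \<in> C \<Longrightarrow> J \<subseteq> K \<or> K \<subseteq> J"
      using that unfolding chains_def chain_subset_def by auto
    then have "ideal (\<Union>C) R"
      using False by (intro ideal_Union_chain) (auto simp: A_def)
    moreover have "\<one> \<notin> \<Union>C" "I \<subseteq> \<Union>C"
      using \<open>C \<subseteq> A\<close> False unfolding A_def by auto
    ultimately show ?thesis
      unfolding A_def by blast
  qed (use \<open>I \<in> A\<close> in blast)
  then obtain M where M: "M \<in> A" "\<And>J. J \<in> A \<Longrightarrow> M \<subseteq> J \<Longrightarrow> J = M"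
    using Zorn_Lemma2[of A] by auto
  have "maximalideal M R"
  proof (rule maximalidealI)
    show "ideal M R" "carrier R \<noteq> M"
      using M(1) unfolding A_def by auto
    fix J assume J: "ideal J R" "M \<subseteq> J" "J \<subseteq> carrier R"
    show "J = M \<or> J = carrier R"
    proof (cases "\<one> \<in> J")
      case True
      then show ?thesis using J(1) ideal.one_imp_carrier by blast
    next
      case False
      with J M(1) have "J \<in> A" unfolding A_def by auto
      with M(2) J(2) show ?thesis by blast
    qed
  qed
  moreover have "I \<subseteq> M"
    using M(1) unfolding A_def by blast
  ultimately show thesis by (rule that)
qed

lemma ideal_B1_nonneg_positive_on:
  assumes I: "ideal I (B1_ring X)" and "finite S" and nz: "\<forall>x\<in>S. \<exists>f\<in>I. f x \<noteq> 0"
  shows "\<exists>h\<in>I. (\<forall>y. 0 \<le> h y) \<and> (\<forall>y\<in>S. 0 < h y)"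
  using \<open>finite S\<close> nz
proof (induction S rule: finite_induct)
  case empty
  have "(\<lambda>x. 0) \<in> I"
    using additive_subgroup.zero_closed[OF ideal.axioms(1)[OF I]] by (simp add: B1_ring_def)
  then show ?case by auto
next
  case (insert a S)
  then obtain h where h: "h \<in> I" "\<forall>y. 0 \<le> h y" "\<forall>y\<in>S. 0 < h y"
    by auto
  obtain f where f: "f \<in> I" "f a \<noteq> 0"
    using insert.prems by auto
  have "f \<in> carrier (B1_ring X)"
    using f(1) additive_subgroup.a_subset[OF ideal.axioms(1)[OF I]] by blast
  then have "f \<otimes>\<^bsub>B1_ring X\<^esub> f \<in> I"
    using ideal.I_l_closed[OF I f(1)] by blast
  then have "h \<oplus>\<^bsub>B1_ring X\<^esub> (f \<otimes>\<^bsub>B1_ring X\<^esub> f) \<in> I"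
    using additive_subgroup.a_closed[OF ideal.axioms(1)[OF I]] h(1) by blast
  then have "(\<lambda>y. h y + f y * f y) \<in> I"
    by (simp add: B1_ring_def)
  moreover have "\<forall>y. 0 \<le> h y + f y * f y"
    using h(2) by simp
  moreover have "0 < h a + f a * f a"
    using h(2) f(2) by (metis add_nonneg_pos not_real_square_gt_zero)
  then have "\<forall>y\<in>insert a S. 0 < h y + f y * f y"
    using h(3) by (simp add: add_pos_nonneg)
  ultimately show ?case
    by (intro bexI[of _ "\<lambda>y. h y + f y * f y"] conjI)
qed

lemma finite_t1_imp_ideal_fixed:
  assumes fin: "finite (topspace X)" and "t1_space X"
    and I: "ideal I (B1_ring X)" and proper: "I \<noteq> carrier (B1_ring X)"
  shows "fixed_ideal X I"
proof (rule ccontr)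
  assume "\<not> fixed_ideal X I"
  then have "\<forall>x\<in>topspace X. \<exists>f\<in>I. f x \<noteq> 0"
    unfolding fixed_ideal_def zero_set_def by blast
  then obtain h where h: "h \<in> I" "\<forall>y\<in>topspace X. 0 < h y"
    using ideal_B1_nonneg_positive_on[OF I fin] by blast
  define k where "k = (\<lambda>y. if y \<in> topspace X then 1 / h y else 0)"
  have discrete: "X = discrete_topology (topspace X)"
    using finite_t1_space_imp_discrete_topology fin \<open>t1_space X\<close> by blast
  have "continuous_map X euclideanreal k"
    by (subst discrete) (simp add: continuous_map_from_discrete_topology)
  then have "k \<in> carrier (B1_ring X)"
    by (auto simp: B1_ring_def baire_one_def k_def intro!: exI[of _ "\<lambda>n. k"])
  then have "k \<otimes>\<^bsub>B1_ring X\<^esub> h \<in> I"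
    using ideal.I_l_closed[OF I h(1)] by blast
  moreover have "k \<otimes>\<^bsub>B1_ring X\<^esub> h = \<one>\<^bsub>B1_ring X\<^esub>"
    using h(2) by (auto simp: B1_ring_def k_def fun_eq_iff)
  ultimately show False
    using ideal.one_imp_carrier[OF I] proper by simp
qed

lemma baire_one_singleton_indicator:
  assumes pn: "perfectly_normal_space X" and "t1_space X" and x: "x \<in> topspace X"
  shows "(\<lambda>y. if y = x then 1 else 0) \<in> baire_one X"
proof -
  have closed: "closedin X {x}"
    using iffD1[OF t1_space_closedin_singleton \<open>t1_space X\<close>] x by blast
  then have "gdelta_in X {x}"
    using pn unfolding perfectly_normal_space_def by blast
  then obtain C where C: "\<And>n. openin X (C n)" "\<And>n. C (Suc n) \<subseteq> C n" "\<Inter>(range C) = {x}"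
    by (auto simp: gdelta_in_descending)
  have normal: "normal_space X"
    using pn unfolding perfectly_normal_space_def by blast
  have "\<forall>n. \<exists>g. continuous_map X euclideanreal g \<and> g ` {x} \<subseteq> {1} \<and> g ` (topspace X - C n) \<subseteq> {0}"
  proof
    fix n
    have "closedin X (topspace X - C n)" "disjnt {x} (topspace X - C n)"
      using C(1,3) by (auto simp: disjnt_def)
    then obtain g :: "'a \<Rightarrow> real" where "continuous_map X euclideanreal g" "g ` {x} \<subseteq> {1}"
        "g ` (topspace X - C n) \<subseteq> {0}"
      using Urysohn_lemma_alt[OF normal closed] by metis
    then show "\<exists>g. continuous_map X euclideanreal g \<and> g ` {x} \<subseteq> {1} \<and> g ` (topspace X - C n) \<subseteq> {0}"
      by blast
  qed
  then obtain g where "\<forall>n. continuous_map X euclideanreal (g n) \<and> g n ` {x} \<subseteq> {1}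
      \<and> g n ` (topspace X - C n) \<subseteq> {0}"
    by metis
  then have g: "\<And>n. continuous_map X euclideanreal (g n)" "\<And>n. g n x = 1"
      "\<And>n y. y \<in> topspace X \<Longrightarrow> y \<notin> C n \<Longrightarrow> g n y = 0"
    by blast+
  have "(\<lambda>n. g n y) \<longlonglongrightarrow> (if y = x then 1 else 0)" if y: "y \<in> topspace X" for y
  proof (cases "y = x")
    case False
    then obtain N where "y \<notin> C N"
      using C(3) by blast
    moreover have "C n \<subseteq> C N" if "N \<le> n" for n
      using C(2) that by (metis lift_Suc_antimono_le)
    ultimately have "\<forall>n\<ge>N. g n y = 0"
      using g(3) y by blast
    then have "(\<lambda>n. g n y) \<longlonglongrightarrow> 0"
      by (intro tendsto_eventually) (auto simp: eventually_sequentially)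
    with False show ?thesis by simp
  qed (simp add: g(2))
  with g(1) x show ?thesis
    unfolding baire_one_def by (intro CollectI conjI exI[of _ g]) auto
qed

lemma ideal_B1_finite_support:
  "ideal {f \<in> baire_one X. finite {x. f x \<noteq> 0}} (B1_ring X)" (is "ideal ?I ?R")
proof -
  interpret R: cring ?R by (rule cring_B1_ring)
  have minus: "\<ominus>\<^bsub>?R\<^esub> f = (\<lambda>x. - f x)" if "f \<in> baire_one X" for f
    by (rule R.minus_equality) (auto simp: B1_ring_def that baire_one_minus)
  show ?thesis
  proof (rule idealI)
    show "subgroup ?I (add_monoid ?R)"
    proof (rule R.add.subgroupI)
      show "?I \<subseteq> carrier ?R" "?I \<noteq> {}"
        using baire_one_zero[of X] by (auto simp: B1_ring_def)
      fix f assume "f \<in> ?I"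
      then show "\<ominus>\<^bsub>?R\<^esub> f \<in> ?I"
        using minus baire_one_minus by auto
    next
      fix f g assume f: "f \<in> ?I" and g: "g \<in> ?I"
      have "{x. f x + g x \<noteq> 0} \<subseteq> {x. f x \<noteq> 0} \<union> {x. g x \<noteq> 0}" by auto
      with f g show "f \<oplus>\<^bsub>?R\<^esub> g \<in> ?I"
        by (auto simp: B1_ring_def baire_one_add finite_subset)
    qed
  next
    fix f g assume f: "f \<in> ?I" and "g \<in> carrier ?R"
    moreover have "{x. g x * f x \<noteq> 0} \<subseteq> {x. f x \<noteq> 0}" "{x. f x * g x \<noteq> 0} \<subseteq> {x. f x \<noteq> 0}"
      by auto
    ultimately show "g \<otimes>\<^bsub>?R\<^esub> f \<in> ?I" "f \<otimes>\<^bsub>?R\<^esub> g \<in> ?I"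
      by (auto simp: B1_ring_def baire_one_mult finite_subset)
  qed (rule R.ring_axioms)
qed

lemma infinite_imp_free_maximalideal:
  assumes "perfectly_normal_space X" "t1_space X" and inf: "infinite (topspace X)"
  obtains M where "maximalideal M (B1_ring X)" "\<not> fixed_ideal X M"
proof -
  interpret R: cring "B1_ring X" by (rule cring_B1_ring)
  define I where "I = {f \<in> baire_one X. finite {x. f x \<noteq> 0}}"
  have "{x. (if x \<in> topspace X then 1 else 0::real) \<noteq> 0} = topspace X"
    by auto
  then have "\<one>\<^bsub>B1_ring X\<^esub> \<notin> I"
    using inf by (simp add: I_def B1_ring_def)
  then obtain M where M: "maximalideal M (B1_ring X)" "I \<subseteq> M"
    using R.exists_maximalideal_superset[OF ideal_B1_finite_support] R.one_closed
    unfolding I_def by blast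
  have "\<not> fixed_ideal X M"
  proof
    assume "fixed_ideal X M"
    then obtain x where x: "x \<in> topspace X" "\<forall>f\<in>M. x \<in> zero_set X f"
      unfolding fixed_ideal_def by blast
    have "(\<lambda>y. if y = x then 1 else 0) \<in> I"
      using baire_one_singleton_indicator[OF assms(1,2) x(1)] by (simp add: I_def)
    with M(2) x(2) show False
      by (force simp: zero_set_def)
  qed
  with M(1) that show thesis by blast
qed

theorem theorem3p9:
  fixes X :: "'a topology"
  assumes "perfectly_normal_space X" and "t1_space X"
  shows "(finite (topspace X) \<longleftrightarrow>
            (\<forall>I. maximalideal I (B1_ring X) \<longrightarrow> fixed_ideal X I))
       \<and> ((\<forall>I. maximalideal I (B1_ring X) \<longrightarrow> fixed_ideal X I) \<longleftrightarrow>
            (\<forall>I. ideal I (B1_ring X) \<and> I \<noteq> carrier (B1_ring X) \<longrightarrow> fixed_ideal X I))"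
proof -
  have maximal_proper: "ideal M (B1_ring X) \<and> M \<noteq> carrier (B1_ring X)"
    if "maximalideal M (B1_ring X)" for M
    using that maximalideal.axioms(1) maximalideal.I_notcarr by metis
  have "finite (topspace X)" if "\<forall>M. maximalideal M (B1_ring X) \<longrightarrow> fixed_ideal X M"
    using that infinite_imp_free_maximalideal[OF assms] by metis
  then show ?thesis
    using finite_t1_imp_ideal_fixed[OF _ assms(2)] maximal_proper by blast
qed

end
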